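(* Let $S_1\subseteq S$ with $|S_1|>1$. Let $\beta\in(0,1/2^{|S|})$, $a>0$, and $\varepsilon\in\left(0,\frac12\left(\frac{a}{L}\right)^{|S|}\frac{\beta(1-\beta)}{L\,|S|^4}\right)$. Let $q$ be an irreducible transition matrix on $S$ such that $\mathbf P_{s,q}\big(T^+_{\overline{S_1}\cup\{t\}}=T^+_{\{t\}}\big)\ge a$ for all $s,t\in S_1$. Let $\widehat q$ be a transition matrix on $S$ that is $(\varepsilon,\beta)$-close to $q$ on $S_1$ and satisfies $\widehat q(t\mid s)=q(t\mid s)$ for all $s\in S\setminus S_1$, $t\in S$. Then: (1) all states of $S_1$ belong to the same recurrent class $R$ of $\widehat q$; (2) the stationary distribution $\widehat\mu$ of $\widehat q$ on $R$ satisfies $\left|1-\frac{\widehat\mu(s\mid S_1)}{\mu(s\mid S_1)}\right|\le 18\beta L$ for every $s\in S_1$, where $\mu(s\mid S_1)=\mu_s/\mu_{S_1}$ and $\widehat\mu(s\mid S_1)=\widehat\mu_s/\widehat\mu_{S_1}$.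
   Context: $S$ is a finite set with $|S|\ge 2$. A transition matrix on $S$ is $q=(q(t\mid s))_{s,t\in S}$ with nonnegative entries and rows summing to $1$; $q(D\mid s)=\sum_{t\in D}q(t\mid s)$, $\overline C=S\setminus C$. For irreducible $q$, $\mu$ is its stationary distribution and $\mu_C=\sum_{s\in C}\mu_s$. $(\mathbf s_n)_{n\ge0}$ is a Markov chain with transition matrix $q$, $\mathbf P_{s,q}$ its law when $\mathbf s_0=s$; for $C\subsetneq S$, $T^+_C=\min\{n\ge1:\mathbf s_n\in C\}$ (with $\min\emptyset=+\infty$). Define $\zeta^1_q=\min_{\emptyset\neq C\subsetneq S_1}\sum_{s\in C}\mu_s q(\overline C\mid s)$. Given $\varepsilon,\beta>0$, $\widehat q$ is $(\varepsilon,\beta)$-close to $q$ on $S_1$ if for all $s,t\in S$, $\left|1-\frac{\widehat q(t\mid s)}{q(t\mid s)}\right|\le\beta$ whenever (a) $\mu_s q(t\mid s)\ge\varepsilon\zeta^1_q$ or (b) $\mu_s\widehat q(t\mid s)\ge\varepsilon\zeta^1_q$ (in case (b) this requires in particular $q(t\mid s)>0$). $L=\sum_{n=1}^{|S|-1}\binom{|S|}{n}n^{|S|}$. The stationary distribution of $\widehat q$ on $R$ is viewed as a distribution on $S$ vanishing outside $R$. *)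

theory Defs
  imports Complex_Main "HOL-Library.Cardinality"
begin

text \<open>The state space S is a finite type 's; a transition matrix is q :: 's => 's => real,
  with q s t standing for q(t | s).\<close>

definition transition_matrix :: "('s::finite \<Rightarrow> 's \<Rightarrow> real) \<Rightarrow> bool" where
  "transition_matrix q \<longleftrightarrow> (\<forall>s t. 0 \<le> q s t) \<and> (\<forall>s. (\<Sum>t\<in>UNIV. q s t) = 1)"

definition irreducible :: "('s::finite \<Rightarrow> 's \<Rightarrow> real) \<Rightarrow> bool" where
  "irreducible q \<longleftrightarrow> (\<forall>s t. (s, t) \<in> {(x, y). 0 < q x y}\<^sup>*)"

definition stationary :: "('s::finite \<Rightarrow> 's \<Rightarrow> real) \<Rightarrow> ('s \<Rightarrow> real) \<Rightarrow> bool" where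
  "stationary q \<mu> \<longleftrightarrow> (\<forall>s. 0 \<le> \<mu> s) \<and> (\<Sum>s\<in>UNIV. \<mu> s) = 1 \<and>
     (\<forall>t. (\<Sum>s\<in>UNIV. \<mu> s * q s t) = \<mu> t)"

text \<open>The stationary distribution of an irreducible q (unique in that case).\<close>
definition stat_dist :: "('s::finite \<Rightarrow> 's \<Rightarrow> real) \<Rightarrow> 's \<Rightarrow> real" where
  "stat_dist q = (THE \<mu>. stationary q \<mu>)"

definition recurrent_class :: "('s::finite \<Rightarrow> 's \<Rightarrow> real) \<Rightarrow> 's set \<Rightarrow> bool" where
  "recurrent_class q R \<longleftrightarrow> R \<noteq> {} \<and>
     (\<forall>x\<in>R. \<forall>y\<in>R. (x, y) \<in> {(u, v). 0 < q u v}\<^sup>*) \<and>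
     (\<forall>x\<in>R. \<forall>y. 0 < q x y \<longrightarrow> y \<in> R)"

text \<open>first_entrance q C n s t = P_{s,q}(T^+_C = n and s_n = t): the probability of a path
  s = s_0, s_1, ..., s_n with s_1, ..., s_(n-1) outside C and s_n = t in C.\<close>
fun first_entrance :: "('s::finite \<Rightarrow> 's \<Rightarrow> real) \<Rightarrow> 's set \<Rightarrow> nat \<Rightarrow> 's \<Rightarrow> 's \<Rightarrow> real" where
  "first_entrance q C 0 s t = 0"
| "first_entrance q C (Suc 0) s t = (if t \<in> C then q s t else 0)"
| "first_entrance q C (Suc (Suc n)) s t = (\<Sum>u\<in>-C. q s u * first_entrance q C (Suc n) u t)"

text \<open>P_{s,q}(T^+_C < infinity and s_{T^+_C} = t).\<close>
definition hit_at :: "('s::finite \<Rightarrow> 's \<Rightarrow> real) \<Rightarrow> 's set \<Rightarrow> 's \<Rightarrow> 's \<Rightarrow> real" where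
  "hit_at q C s t = (\<Sum>n. first_entrance q C n s t)"

text \<open>P_{s,q}(T^+_C = T^+_{t}) for t in C: either T^+_C is finite and the chain is at t then,
  or T^+_C = T^+_{t} = infinity.\<close>
definition prob_first_hit_eq :: "('s::finite \<Rightarrow> 's \<Rightarrow> real) \<Rightarrow> 's set \<Rightarrow> 's \<Rightarrow> 's \<Rightarrow> real" where
  "prob_first_hit_eq q C t s = hit_at q C s t + (1 - (\<Sum>u\<in>C. hit_at q C s u))"

definition zeta1 :: "('s::finite \<Rightarrow> 's \<Rightarrow> real) \<Rightarrow> 's set \<Rightarrow> real" where
  "zeta1 q S1 = Min {(\<Sum>s\<in>C. stat_dist q s * (\<Sum>t\<in>-C. q s t)) | C. C \<noteq> {} \<and> C \<subset> S1}"

definition eps_beta_close ::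
  "real \<Rightarrow> real \<Rightarrow> ('s::finite \<Rightarrow> 's \<Rightarrow> real) \<Rightarrow> ('s \<Rightarrow> 's \<Rightarrow> real) \<Rightarrow> 's set \<Rightarrow> bool" where
  "eps_beta_close \<epsilon> \<beta> qh q S1 \<longleftrightarrow> (\<forall>s t.
     (stat_dist q s * q s t \<ge> \<epsilon> * zeta1 q S1 \<longrightarrow> \<bar>1 - qh s t / q s t\<bar> \<le> \<beta>) \<and>
     (stat_dist q s * qh s t \<ge> \<epsilon> * zeta1 q S1 \<longrightarrow> 0 < q s t \<and> \<bar>1 - qh s t / q s t\<bar> \<le> \<beta>))"

definition Lconst :: "nat \<Rightarrow> real" where
  "Lconst N = (\<Sum>n=1..N-1. real (N choose n) * real n ^ N)"

end

theory Submission
  imports Defs "HOL-Analysis.Cartesian_Space"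
begin

text \<open>The perturbed chain qh agrees with q off S1, so both chains have the same entry function
  G_A(v) = P_v(the chain enters S1 first in A), harmonic off S1. For nonempty A \<subset> S1, the
  invariance of a measure \<nu> gives the flow balance
  \<Sum>_A \<nu> (1 - qh G_A) = \<Sum>_(S1 \<setminus> A) \<nu> qh G_A.
  For \<nu> = \<mu> and the chain q the common value is at least a \<zeta>, by the hitting hypothesis;
  (\<epsilon>,\<beta>)-closeness changes both sides by a factor 1 \<plusminus> \<beta> up to an error
  |S|^2 \<epsilon> \<zeta> that is small against a \<beta> \<zeta>. This yields the escape inequality
  \<Sum>_(S1 \<setminus> A) \<mu> qh G_A < (1 + 3\<beta>) \<Sum>_A \<mu> (1 - qh G_A), whose right side is positive:
  S1 communicates under qh and lies in a single recurrent class. Comparing the flow balance for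
  the stationary distribution of qh with the escape inequality, every superlevel set of the
  density \<mu>h/\<mu> on S1 can be enlarged at the cost of a factor 1 + 3\<beta>, so the density varies on
  S1 by a factor at most (1 + 3\<beta>)^(|S1| - 1) \<le> 1 + 18 \<beta> L.\<close>

definition expect_next :: "('s::finite \<Rightarrow> 's \<Rightarrow> real) \<Rightarrow> ('s \<Rightarrow> real) \<Rightarrow> 's \<Rightarrow> real" where
  "expect_next p f u = (\<Sum>w\<in>UNIV. p u w * f w)"

lemma transition_matrix_nonneg: "transition_matrix q \<Longrightarrow> 0 \<le> q s t"
  by (simp add: transition_matrix_def)

lemma transition_matrix_row_sum: "transition_matrix q \<Longrightarrow> (\<Sum>t\<in>UNIV. q s t) = 1"
  by (simp add: transition_matrix_def)

lemma sum_split_Compl: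
  fixes f :: "'s::finite \<Rightarrow> 'a::comm_monoid_add"
  shows "(\<Sum>x\<in>UNIV. f x) = (\<Sum>x\<in>C. f x) + (\<Sum>x\<in>-C. f x)"
  using sum.subset_diff[of C UNIV f] by (simp add: Compl_eq_Diff_UNIV add.commute)

lemma expect_next_one_minus:
  "transition_matrix p \<Longrightarrow> 1 - expect_next p f u = expect_next p (\<lambda>w. 1 - f w) u"
  by (simp add: expect_next_def transition_matrix_row_sum right_diff_distrib sum_subtractf)

lemma expect_next_bounds:
  assumes p: "transition_matrix p" and f: "\<And>w. 0 \<le> f w" "\<And>w. f w \<le> 1"
  shows "0 \<le> expect_next p f u" "expect_next p f u \<le> 1"
proof -
  show "0 \<le> expect_next p f u"
    unfolding expect_next_def by (intro sum_nonneg mult_nonneg_nonneg transition_matrix_nonneg[OF p] f)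
  have "expect_next p f u \<le> (\<Sum>w\<in>UNIV. p u w)"
    unfolding expect_next_def by (intro sum_mono mult_left_le transition_matrix_nonneg[OF p] f)
  then show "expect_next p f u \<le> 1" by (simp add: transition_matrix_row_sum[OF p])
qed

section \<open>Stationary distributions of irreducible chains\<close>

lemma invariant_vector_exists:
  fixes q :: "'s::finite \<Rightarrow> 's \<Rightarrow> real"
  assumes tm: "transition_matrix q"
  shows "\<exists>x. x \<noteq> (\<lambda>_. 0) \<and> (\<forall>t. (\<Sum>s\<in>UNIV. x s * q s t) = x t)"
proof -
  define f :: "real^'s \<Rightarrow> real^'s" where "f = (\<lambda>x. \<chi> t. x$t - (\<Sum>s\<in>UNIV. x$s * q s t))"
  have lin: "linear f"
    unfolding f_def
    by (rule linearI) (auto simp: vec_eq_iff algebra_simps sum.distrib sum_distrib_left)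
  \<comment> \<open>The image of f consists of zero-sum vectors, so f is not surjective.\<close>
  have zero_sum: "(\<Sum>t\<in>UNIV. f x $ t) = 0" for x
  proof -
    have "(\<Sum>t\<in>UNIV. \<Sum>s\<in>UNIV. x$s * q s t) = (\<Sum>s\<in>UNIV. x$s * (\<Sum>t\<in>UNIV. q s t))"
      by (subst sum.swap) (simp add: sum_distrib_left)
    moreover have "(\<Sum>t\<in>UNIV. f x $ t) = (\<Sum>t\<in>UNIV. x$t) - (\<Sum>t\<in>UNIV. \<Sum>s\<in>UNIV. x$s * q s t)"
      by (simp add: f_def sum_subtractf)
    ultimately show ?thesis by (simp add: transition_matrix_row_sum[OF tm])
  qed
  have "\<not> surj f"
  proof
    assume "surj f"
    then obtain x where "f x = (\<chi> t. if t = undefined then 1 else 0)" by (metis surjD)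
    then have "(\<Sum>t\<in>UNIV. f x $ t) = 1" by simp
    then show False using zero_sum[of x] by simp
  qed
  then have "\<not> inj f" using linear_injective_imp_surjective[OF lin] by blast
  then obtain x where x: "f x = 0" "x \<noteq> 0" using linear_injective_0[OF lin] by blast
  show ?thesis
  proof (intro exI conjI allI)
    show "(\<lambda>s. x$s) \<noteq> (\<lambda>_. 0)" using x(2) by (auto simp: vec_eq_iff)
    show "(\<Sum>s\<in>UNIV. x$s * q s t) = x$t" for t
    proof -
      have "f x $ t = 0" using x(1) by simp
      then show ?thesis by (simp add: f_def)
    qed
  qed
qed

lemma invariant_abs:
  fixes q :: "'s::finite \<Rightarrow> 's \<Rightarrow> real"
  assumes tm: "transition_matrix q" and inv: "\<forall>t. (\<Sum>s\<in>UNIV. x s * q s t) = x t"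
  shows "\<forall>t. (\<Sum>s\<in>UNIV. \<bar>x s\<bar> * q s t) = \<bar>x t\<bar>"
proof -
  have le: "\<bar>x t\<bar> \<le> (\<Sum>s\<in>UNIV. \<bar>x s\<bar> * q s t)" for t
  proof -
    have "\<bar>x t\<bar> = \<bar>\<Sum>s\<in>UNIV. x s * q s t\<bar>" using inv by simp
    also have "\<dots> \<le> (\<Sum>s\<in>UNIV. \<bar>x s * q s t\<bar>)" by (rule sum_abs)
    also have "\<dots> = (\<Sum>s\<in>UNIV. \<bar>x s\<bar> * q s t)"
      by (simp add: abs_mult transition_matrix_nonneg[OF tm])
    finally show ?thesis .
  qed
  \<comment> \<open>Both sides have the same total mass, so the inequality is an equality.\<close>
  have "(\<Sum>t\<in>UNIV. \<Sum>s\<in>UNIV. \<bar>x s\<bar> * q s t) = (\<Sum>s\<in>UNIV. \<bar>x s\<bar> * (\<Sum>t\<in>UNIV. q s t))"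
    by (subst sum.swap) (simp add: sum_distrib_left)
  then have "(\<Sum>t\<in>UNIV. (\<Sum>s\<in>UNIV. \<bar>x s\<bar> * q s t) - \<bar>x t\<bar>) = 0"
    by (simp add: sum_subtractf transition_matrix_row_sum[OF tm])
  then have "\<forall>t\<in>UNIV. (\<Sum>s\<in>UNIV. \<bar>x s\<bar> * q s t) - \<bar>x t\<bar> = 0"
    by (subst sum_nonneg_eq_0_iff[symmetric]) (auto simp: le)
  then show ?thesis by auto
qed

lemma invariant_zero_backwards:
  fixes p :: "'s::finite \<Rightarrow> 's \<Rightarrow> real"
  assumes p: "\<And>s t. 0 \<le> p s t" and y: "\<And>s. 0 \<le> y s"
    and inv: "\<forall>t. (\<Sum>s\<in>UNIV. y s * p s t) = y t"
    and path: "(s, t) \<in> {(x, y). 0 < p x y}\<^sup>*" and zero: "y t = 0"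
  shows "y s = 0"
  using path
proof (induction rule: converse_rtrancl_induct)
  case base
  show ?case using zero .
next
  case (step a b)
  have "(\<Sum>s\<in>UNIV. y s * p s b) = 0" using inv step.IH by simp
  then have "y a * p a b = 0"
    by (subst (asm) sum_nonneg_eq_0_iff) (auto simp: p y)
  then show ?case using step.hyps(1) by simp
qed

lemma irreducible_invariant_pos:
  fixes q :: "'s::finite \<Rightarrow> 's \<Rightarrow> real"
  assumes tm: "transition_matrix q" and irr: "irreducible q"
    and y: "\<And>s. 0 \<le> y s" and inv: "\<forall>t. (\<Sum>s\<in>UNIV. y s * q s t) = y t"
    and nz: "y s0 \<noteq> 0"
  shows "0 < y s"
proof (rule ccontr)
  assume "\<not> 0 < y s"
  then have "y s = 0" using y[of s] by simp
  moreover have "(s0, s) \<in> {(x, y). 0 < q x y}\<^sup>*" using irr by (simp add: irreducible_def)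
  ultimately have "y s0 = 0"
    using invariant_zero_backwards[OF transition_matrix_nonneg[OF tm] y inv] by blast
  with nz show False by simp
qed

lemma stationary_pos_at_common_target:
  fixes p :: "'s::finite \<Rightarrow> 's \<Rightarrow> real"
  assumes tm: "transition_matrix p" and st: "stationary p \<nu>"
    and target: "\<And>x. (x, t) \<in> {(x, y). 0 < p x y}\<^sup>*"
  shows "0 < \<nu> t"
proof (rule ccontr)
  have \<nu>: "\<And>s. 0 \<le> \<nu> s" and inv: "\<forall>t. (\<Sum>s\<in>UNIV. \<nu> s * p s t) = \<nu> t"
    using st by (auto simp: stationary_def)
  assume "\<not> 0 < \<nu> t"
  then have "\<nu> t = 0" using \<nu>[of t] by simp
  then have "\<nu> x = 0" for x
    using invariant_zero_backwards[OF transition_matrix_nonneg[OF tm] \<nu> inv target] by blast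
  then show False using st by (simp add: stationary_def)
qed

lemma stationary_unique:
  fixes q :: "'s::finite \<Rightarrow> 's \<Rightarrow> real"
  assumes tm: "transition_matrix q" and irr: "irreducible q"
    and m: "stationary q \<mu>" and n: "stationary q \<nu>"
  shows "\<mu> = \<nu>"
proof (rule ccontr)
  assume ne: "\<mu> \<noteq> \<nu>"
  define x where "x = (\<lambda>s. \<mu> s - \<nu> s)"
  have inv: "\<forall>t. (\<Sum>s\<in>UNIV. x s * q s t) = x t"
    using m n by (simp add: stationary_def x_def left_diff_distrib sum_subtractf)
  have ainv: "\<forall>t. (\<Sum>s\<in>UNIV. \<bar>x s\<bar> * q s t) = \<bar>x t\<bar>" by (rule invariant_abs[OF tm inv])
  \<comment> \<open>The positive and negative parts of the invariant zero-sum vector x are invariant,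
    nonzero, and hence both positive everywhere, which is absurd.\<close>
  define xp where "xp = (\<lambda>s. (\<bar>x s\<bar> + x s) / 2)"
  define xm where "xm = (\<lambda>s. (\<bar>x s\<bar> - x s) / 2)"
  have ipp: "\<forall>t. (\<Sum>s\<in>UNIV. xp s * q s t) = xp t"
    using inv ainv
    by (simp add: xp_def add_divide_distrib distrib_right sum.distrib sum_divide_distrib[symmetric])
  have imm: "\<forall>t. (\<Sum>s\<in>UNIV. xm s * q s t) = xm t"
    using inv ainv
    by (simp add: xm_def diff_divide_distrib left_diff_distrib sum_subtractf sum_divide_distrib[symmetric])
  have sx: "(\<Sum>s\<in>UNIV. x s) = 0" using m n by (simp add: stationary_def x_def sum_subtractf)
  obtain s1 where s1: "x s1 \<noteq> 0" using ne by (auto simp: x_def fun_eq_iff)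
  have "0 < (\<Sum>s\<in>UNIV. \<bar>x s\<bar>)"
    using s1 by (intro sum_pos2[of UNIV s1]) auto
  then have "0 < (\<Sum>s\<in>UNIV. xp s)" "0 < (\<Sum>s\<in>UNIV. xm s)"
    using sx by (simp_all add: xp_def xm_def sum_divide_distrib[symmetric] sum.distrib sum_subtractf)
  then obtain a b where a: "xp a \<noteq> 0" and b: "xm b \<noteq> 0"
    by (metis less_irrefl sum.neutral)
  have "0 < xp s1" by (rule irreducible_invariant_pos[OF tm irr _ ipp a]) (simp add: xp_def)
  moreover have "0 < xm s1" by (rule irreducible_invariant_pos[OF tm irr _ imm b]) (simp add: xm_def)
  ultimately show False by (simp add: xp_def xm_def abs_if split: if_splits)
qed

lemma stationary_stat_dist_and_pos:
  fixes q :: "'s::finite \<Rightarrow> 's \<Rightarrow> real"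
  assumes tm: "transition_matrix q" and irr: "irreducible q"
  shows "stationary q (stat_dist q) \<and> (\<forall>s. 0 < stat_dist q s)"
proof -
  obtain x where x: "x \<noteq> (\<lambda>_. 0)" "\<forall>t. (\<Sum>s\<in>UNIV. x s * q s t) = x t"
    using invariant_vector_exists[OF tm] by blast
  have ainv: "\<forall>t. (\<Sum>s\<in>UNIV. \<bar>x s\<bar> * q s t) = \<bar>x t\<bar>" by (rule invariant_abs[OF tm x(2)])
  obtain s1 where s1: "x s1 \<noteq> 0" using x(1) by auto
  define S where "S = (\<Sum>s\<in>UNIV. \<bar>x s\<bar>)"
  have S: "0 < S" unfolding S_def using s1 by (intro sum_pos2[of UNIV s1]) auto
  define \<mu> where "\<mu> = (\<lambda>s. \<bar>x s\<bar> / S)"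
  have st: "stationary q \<mu>"
    unfolding stationary_def
    using S ainv by (simp add: \<mu>_def sum_divide_distrib[symmetric] S_def)
  have "stat_dist q = \<mu>"
    unfolding stat_dist_def using st stationary_unique[OF tm irr _ st] by blast
  moreover have "0 < \<mu> s" for s
    by (rule irreducible_invariant_pos[OF tm irr, of _ s1])
      (use st S s1 in \<open>auto simp: stationary_def \<mu>_def\<close>)
  ultimately show ?thesis using st by simp
qed

lemma stationary_stat_dist: "transition_matrix q \<Longrightarrow> irreducible q \<Longrightarrow> stationary q (stat_dist q)"
  using stationary_stat_dist_and_pos by blast

lemma stat_dist_pos: "transition_matrix q \<Longrightarrow> irreducible q \<Longrightarrow> 0 < stat_dist q s"
  using stationary_stat_dist_and_pos by blast

section \<open>First entrance and hitting probabilities\<close>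

lemma first_entrance_nonneg: "transition_matrix q \<Longrightarrow> 0 \<le> first_entrance q C n s t"
  by (induction q C n s t rule: first_entrance.induct)
     (auto simp: transition_matrix_def intro!: sum_nonneg mult_nonneg_nonneg)

lemma first_entrance_outside: "t \<notin> C \<Longrightarrow> first_entrance q C n s t = 0"
  by (induction q C n s t rule: first_entrance.induct) auto

lemma first_entrance_partial_sum_rec:
  "(\<Sum>n<Suc (Suc m). first_entrance q C n s t) =
     (if t \<in> C then q s t else 0) + (\<Sum>u\<in>-C. q s u * (\<Sum>n<Suc m. first_entrance q C n u t))"
proof (induction m)
  case 0
  then show ?case by simp
next
  case (Suc m)
  have "(\<Sum>n<Suc (Suc (Suc m)). first_entrance q C n s t) =
        (\<Sum>n<Suc (Suc m). first_entrance q C n s t) + first_entrance q C (Suc (Suc m)) s t"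
    by simp
  also have "\<dots> = (if t \<in> C then q s t else 0) +
      (\<Sum>u\<in>-C. q s u * (\<Sum>n<Suc m. first_entrance q C n u t) + q s u * first_entrance q C (Suc m) u t)"
    by (simp only: Suc sum.distrib first_entrance.simps)
  also have "\<dots> = (if t \<in> C then q s t else 0) +
      (\<Sum>u\<in>-C. q s u * (\<Sum>n<Suc (Suc m). first_entrance q C n u t))"
    by (simp add: distrib_left)
  finally show ?case .
qed

lemma first_entrance_partial_sum_le_1:
  fixes q :: "'s::finite \<Rightarrow> 's \<Rightarrow> real"
  assumes tm: "transition_matrix q"
  shows "(\<Sum>n<m. \<Sum>t\<in>C. first_entrance q C n s t) \<le> 1"
proof -
  have "\<forall>s. (\<Sum>n<Suc k. \<Sum>t\<in>C. first_entrance q C n s t) \<le> 1" for k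
  proof (induction k)
    case 0
    then show ?case by simp
  next
    case (Suc k)
    show ?case
    proof
      fix s
      have IH: "(\<Sum>t\<in>C. \<Sum>n<Suc k. first_entrance q C n u t) \<le> 1" for u
        using Suc.IH by (metis sum.swap)
      have "(\<Sum>n<Suc (Suc k). \<Sum>t\<in>C. first_entrance q C n s t) =
            (\<Sum>t\<in>C. \<Sum>n<Suc (Suc k). first_entrance q C n s t)"
        by (rule sum.swap)
      also have "\<dots> = (\<Sum>t\<in>C. q s t + (\<Sum>u\<in>-C. q s u * (\<Sum>n<Suc k. first_entrance q C n u t)))"
        by (intro sum.cong refl) (simp only: first_entrance_partial_sum_rec if_True)
      also have "\<dots> = (\<Sum>t\<in>C. q s t) + (\<Sum>u\<in>-C. q s u * (\<Sum>t\<in>C. \<Sum>n<Suc k. first_entrance q C n u t))"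
        by (subst sum.distrib, subst sum.swap) (simp add: sum_distrib_left del: sum.lessThan_Suc)
      also have "\<dots> \<le> (\<Sum>t\<in>C. q s t) + (\<Sum>u\<in>-C. q s u * 1)"
        using IH by (intro add_left_mono sum_mono mult_left_mono) (auto simp: transition_matrix_nonneg[OF tm])
      also have "\<dots> = 1" using sum_split_Compl[of "q s" C] by (simp add: transition_matrix_row_sum[OF tm])
      finally show "(\<Sum>n<Suc (Suc k). \<Sum>t\<in>C. first_entrance q C n s t) \<le> 1" .
    qed
  qed
  then show ?thesis by (cases m) auto
qed

lemma summable_first_entrance:
  fixes q :: "'s::finite \<Rightarrow> 's \<Rightarrow> real"
  assumes tm: "transition_matrix q"
  shows "summable (\<lambda>n. first_entrance q C n s t)"
proof (cases "t \<in> C")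
  case True
  have le: "(\<Sum>n<m. first_entrance q C n s t) \<le> (\<Sum>n<m. \<Sum>t\<in>C. first_entrance q C n s t)" for m
    by (intro sum_mono member_le_sum) (auto simp: True first_entrance_nonneg[OF tm])
  have "(\<Sum>n<m. first_entrance q C n s t) \<le> 1" for m
    using le[of m] first_entrance_partial_sum_le_1[OF tm, where m=m and C=C and s=s] by linarith
  then show ?thesis
    by (intro summableI_nonneg_bounded[where x=1]) (auto simp: first_entrance_nonneg[OF tm])
qed (simp add: first_entrance_outside)

lemma hit_at_nonneg: "transition_matrix q \<Longrightarrow> 0 \<le> hit_at q C s t"
  unfolding hit_at_def by (simp add: suminf_nonneg summable_first_entrance first_entrance_nonneg)

lemma hit_at_sum_le_1:
  fixes q :: "'s::finite \<Rightarrow> 's \<Rightarrow> real"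
  assumes tm: "transition_matrix q"
  shows "(\<Sum>t\<in>C. hit_at q C s t) \<le> 1"
proof -
  have "(\<Sum>t\<in>C. hit_at q C s t) = (\<Sum>n. \<Sum>t\<in>C. first_entrance q C n s t)"
    unfolding hit_at_def by (rule suminf_sum[symmetric]) (simp add: summable_first_entrance[OF tm])
  also have "\<dots> \<le> 1"
    by (rule suminf_le_const)
      (auto intro!: summable_sum summable_first_entrance[OF tm] first_entrance_partial_sum_le_1[OF tm])
  finally show ?thesis .
qed

lemma hit_at_rec:
  fixes q :: "'s::finite \<Rightarrow> 's \<Rightarrow> real"
  assumes tm: "transition_matrix q"
  shows "hit_at q C s t = (if t \<in> C then q s t else 0) + (\<Sum>u\<in>-C. q s u * hit_at q C u t)"
proof -
  have "(\<lambda>m. \<Sum>n<Suc (Suc m). first_entrance q C n s t) \<longlonglongrightarrow> hit_at q C s t"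
    unfolding hit_at_def
    using summable_LIMSEQ[OF summable_first_entrance[OF tm]] by (rule LIMSEQ_Suc[OF LIMSEQ_Suc])
  moreover have "(\<lambda>m. (if t \<in> C then q s t else 0) + (\<Sum>u\<in>-C. q s u * (\<Sum>n<Suc m. first_entrance q C n u t)))
      \<longlonglongrightarrow> (if t \<in> C then q s t else 0) + (\<Sum>u\<in>-C. q s u * hit_at q C u t)"
    unfolding hit_at_def
    by (intro tendsto_intros LIMSEQ_Suc summable_LIMSEQ summable_first_entrance[OF tm])
  ultimately show ?thesis
    by (simp only: first_entrance_partial_sum_rec) (rule LIMSEQ_unique)
qed

lemma first_entrance_pos_imp_path:
  fixes q qh :: "'s::finite \<Rightarrow> 's \<Rightarrow> real"
  assumes tm: "transition_matrix q" and same: "\<forall>x\<in>-C. \<forall>y. qh x y = q x y"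
  shows "0 < first_entrance q C (Suc n) v t \<Longrightarrow> v \<in> -C \<Longrightarrow> (v, t) \<in> {(x, y). 0 < qh x y}\<^sup>*"
proof (induction n arbitrary: v)
  case 0
  then have "0 < qh v t" using same by (auto split: if_splits)
  then show ?case by auto
next
  case (Suc n)
  have "0 < (\<Sum>u\<in>-C. q v u * first_entrance q C (Suc n) u t)" using Suc.prems by simp
  then obtain u where u: "u \<in> -C" "0 < q v u * first_entrance q C (Suc n) u t"
    by (metis (no_types, lifting) less_irrefl sum_nonpos not_le)
  then have "0 < q v u" "0 < first_entrance q C (Suc n) u t"
    using transition_matrix_nonneg[OF tm, of v u] first_entrance_nonneg[OF tm, of C "Suc n" u t]
    by (auto simp: zero_less_mult_iff)
  then have "0 < qh v u" "(u, t) \<in> {(x, y). 0 < qh x y}\<^sup>*"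
    using Suc.IH[OF _ u(1)] same Suc.prems(2) by auto
  then show ?case by (meson converse_rtrancl_into_rtrancl case_prodI mem_Collect_eq)
qed

lemma hit_at_pos_imp_path:
  fixes q qh :: "'s::finite \<Rightarrow> 's \<Rightarrow> real"
  assumes tm: "transition_matrix q" and same: "\<forall>x\<in>-C. \<forall>y. qh x y = q x y"
    and pos: "0 < hit_at q C v t" and v: "v \<in> -C"
  shows "(v, t) \<in> {(x, y). 0 < qh x y}\<^sup>*"
proof -
  have "\<exists>n. first_entrance q C n v t \<noteq> 0"
  proof (rule ccontr)
    assume "\<not> ?thesis"
    then have "hit_at q C v t = 0" by (simp add: hit_at_def)
    with pos show False by simp
  qed
  then obtain n where "first_entrance q C n v t \<noteq> 0" by blast
  moreover have "0 \<le> first_entrance q C n v t" by (rule first_entrance_nonneg[OF tm])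
  ultimately have pos_n: "0 < first_entrance q C n v t" by simp
  then obtain m where "n = Suc m" by (cases n) auto
  with pos_n show ?thesis using first_entrance_pos_imp_path[OF tm same _ v] by simp
qed

lemma prob_first_hit_eq_rec:
  fixes q :: "'s::finite \<Rightarrow> 's \<Rightarrow> real"
  assumes tm: "transition_matrix q" and t: "t \<in> C"
  shows "prob_first_hit_eq q C t s = q s t + (\<Sum>u\<in>-C. q s u * prob_first_hit_eq q C t u)"
proof -
  have total: "(\<Sum>x\<in>C. hit_at q C s x) = (\<Sum>x\<in>C. q s x) + (\<Sum>u\<in>-C. q s u * (\<Sum>x\<in>C. hit_at q C u x))"
  proof -
    have "(\<Sum>x\<in>C. hit_at q C s x) = (\<Sum>x\<in>C. q s x + (\<Sum>u\<in>-C. q s u * hit_at q C u x))"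
      by (intro sum.cong refl) (subst hit_at_rec[OF tm], auto)
    also have "\<dots> = (\<Sum>x\<in>C. q s x) + (\<Sum>u\<in>-C. q s u * (\<Sum>x\<in>C. hit_at q C u x))"
      by (subst sum.distrib, subst sum.swap) (simp add: sum_distrib_left)
    finally show ?thesis .
  qed
  have one: "1 = (\<Sum>x\<in>C. q s x) + (\<Sum>u\<in>-C. q s u)"
    using sum_split_Compl[of "q s" C] by (simp add: transition_matrix_row_sum[OF tm])
  have "prob_first_hit_eq q C t s = hit_at q C s t + 1 - (\<Sum>x\<in>C. hit_at q C s x)"
    by (simp add: prob_first_hit_eq_def)
  also have "\<dots> = q s t + (\<Sum>u\<in>-C. q s u * hit_at q C u t) + (\<Sum>u\<in>-C. q s u)
       - (\<Sum>u\<in>-C. q s u * (\<Sum>x\<in>C. hit_at q C u x))"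
    by (subst hit_at_rec[OF tm], subst one, subst total) (simp add: t)
  also have "\<dots> = q s t + (\<Sum>u\<in>-C. q s u * prob_first_hit_eq q C t u)"
    by (simp add: prob_first_hit_eq_def distrib_left right_diff_distrib sum.distrib sum_subtractf)
  finally show ?thesis .
qed

lemma prob_first_hit_eq_le_1:
  assumes tm: "transition_matrix q" and t: "t \<in> C"
  shows "prob_first_hit_eq q C t s \<le> 1"
proof -
  have "hit_at q C s t \<le> (\<Sum>x\<in>C. hit_at q C s x)"
    by (rule member_le_sum) (auto simp: t hit_at_nonneg[OF tm])
  then show ?thesis by (simp add: prob_first_hit_eq_def)
qed

section \<open>Entry distribution on a subset and flow balance\<close>

text \<open>For v outside S1: the probability that the chain started at v enters S1 first inside A,
  or never enters S1.\<close>
definition entry_prob :: "('s::finite \<Rightarrow> 's \<Rightarrow> real) \<Rightarrow> 's set \<Rightarrow> 's set \<Rightarrow> 's \<Rightarrow> real" where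
  "entry_prob q S1 A v =
     (if v \<in> A then 1 else if v \<in> S1 then 0 else 1 - (\<Sum>t\<in>S1-A. hit_at q S1 v t))"

lemma entry_prob_bounds:
  fixes q :: "'s::finite \<Rightarrow> 's \<Rightarrow> real"
  assumes tm: "transition_matrix q"
  shows "0 \<le> entry_prob q S1 A v" "entry_prob q S1 A v \<le> 1"
proof -
  have "(\<Sum>t\<in>S1-A. hit_at q S1 v t) \<le> (\<Sum>t\<in>S1. hit_at q S1 v t)"
    by (rule sum_mono2) (auto simp: hit_at_nonneg[OF tm])
  also have "\<dots> \<le> 1" by (rule hit_at_sum_le_1[OF tm])
  finally have "(\<Sum>t\<in>S1-A. hit_at q S1 v t) \<le> 1" .
  moreover have "0 \<le> (\<Sum>t\<in>S1-A. hit_at q S1 v t)"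
    by (rule sum_nonneg) (simp add: hit_at_nonneg[OF tm])
  ultimately show "0 \<le> entry_prob q S1 A v" "entry_prob q S1 A v \<le> 1"
    by (auto simp: entry_prob_def)
qed

lemma entry_prob_harmonic:
  fixes q :: "'s::finite \<Rightarrow> 's \<Rightarrow> real"
  assumes tm: "transition_matrix q" and A: "A \<subseteq> S1" and v: "v \<notin> S1"
  shows "expect_next q (entry_prob q S1 A) v = entry_prob q S1 A v"
proof -
  define G where "G = entry_prob q S1 A"
  define B where "B = S1 - A"
  have hit_B: "(\<Sum>t\<in>B. hit_at q S1 v t) = (\<Sum>t\<in>B. q v t) + (\<Sum>w\<in>-S1. q v w * (\<Sum>t\<in>B. hit_at q S1 w t))"
  proof -
    have "(\<Sum>t\<in>B. hit_at q S1 v t) = (\<Sum>t\<in>B. q v t + (\<Sum>w\<in>-S1. q v w * hit_at q S1 w t))"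
      by (intro sum.cong refl) (subst hit_at_rec[OF tm], auto simp: B_def)
    also have "\<dots> = (\<Sum>t\<in>B. q v t) + (\<Sum>w\<in>-S1. q v w * (\<Sum>t\<in>B. hit_at q S1 w t))"
      by (subst sum.distrib, subst sum.swap) (simp add: sum_distrib_left)
    finally show ?thesis .
  qed
  have split_S1: "(\<Sum>w\<in>S1. f w) = (\<Sum>w\<in>A. f w) + (\<Sum>w\<in>B. f w)" for f :: "'s \<Rightarrow> real"
    using sum.subset_diff[OF A, of f] by (simp add: B_def add.commute)
  have "expect_next q G v = (\<Sum>w\<in>S1. q v w * G w) + (\<Sum>w\<in>-S1. q v w * G w)"
    unfolding expect_next_def by (rule sum_split_Compl)
  also have "(\<Sum>w\<in>S1. q v w * G w) = (\<Sum>w\<in>A. q v w)"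
    by (simp add: split_S1 G_def entry_prob_def B_def)
  also have "(\<Sum>w\<in>-S1. q v w * G w) = (\<Sum>w\<in>-S1. q v w * (1 - (\<Sum>t\<in>B. hit_at q S1 w t)))"
    using A by (intro sum.cong refl) (auto simp: G_def entry_prob_def B_def)
  finally have "expect_next q G v = (\<Sum>w\<in>A. q v w) + (\<Sum>w\<in>-S1. q v w)
       - (\<Sum>w\<in>-S1. q v w * (\<Sum>t\<in>B. hit_at q S1 w t))"
    by (simp add: right_diff_distrib sum_subtractf)
  moreover have "1 = (\<Sum>w\<in>A. q v w) + (\<Sum>w\<in>B. q v w) + (\<Sum>w\<in>-S1. q v w)"
    using sum_split_Compl[of "q v" S1] split_S1[of "q v"] by (simp add: transition_matrix_row_sum[OF tm])
  moreover have "G v = 1 - (\<Sum>t\<in>B. hit_at q S1 v t)" using v A by (auto simp: G_def entry_prob_def B_def)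
  ultimately show ?thesis using hit_B by (simp add: G_def)
qed

lemma invariant_flow_balance:
  fixes p :: "'s::finite \<Rightarrow> 's \<Rightarrow> real"
  assumes A: "A \<subseteq> S1"
    and G_A: "\<forall>u\<in>A. G u = 1" and G_B: "\<forall>u\<in>S1-A. G u = 0"
    and harmonic: "\<forall>u\<in>-S1. expect_next p G u = G u"
    and inv: "\<forall>t. (\<Sum>s\<in>UNIV. \<nu> s * p s t) = \<nu> t"
  shows "(\<Sum>u\<in>A. \<nu> u * (1 - expect_next p G u)) = (\<Sum>u\<in>S1-A. \<nu> u * expect_next p G u)"
proof -
  define H where "H = expect_next p G"
  have "(\<Sum>v\<in>UNIV. \<nu> v * G v) = (\<Sum>v\<in>UNIV. (\<Sum>u\<in>UNIV. \<nu> u * p u v) * G v)"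
    using inv by simp
  also have "\<dots> = (\<Sum>u\<in>UNIV. \<nu> u * H u)"
    unfolding H_def expect_next_def
    by (simp add: sum_distrib_left sum_distrib_right mult.assoc) (rule sum.swap)
  finally have "(\<Sum>v\<in>UNIV. \<nu> v * G v) = (\<Sum>u\<in>UNIV. \<nu> u * H u)" .
  moreover have "(\<Sum>u\<in>-S1. \<nu> u * G u) = (\<Sum>u\<in>-S1. \<nu> u * H u)"
    using harmonic by (simp add: H_def)
  ultimately have "(\<Sum>v\<in>S1. \<nu> v * G v) = (\<Sum>u\<in>S1. \<nu> u * H u)"
    using sum_split_Compl[of "\<lambda>v. \<nu> v * G v" S1] sum_split_Compl[of "\<lambda>v. \<nu> v * H v" S1] by simp
  moreover have "(\<Sum>v\<in>S1. \<nu> v * G v) = (\<Sum>v\<in>A. \<nu> v)"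
    using sum.subset_diff[OF A, of "\<lambda>v. \<nu> v * G v"] G_A G_B by simp
  moreover have "(\<Sum>u\<in>S1. \<nu> u * H u) = (\<Sum>u\<in>A. \<nu> u * H u) + (\<Sum>u\<in>S1-A. \<nu> u * H u)"
    using sum.subset_diff[OF A, of "\<lambda>u. \<nu> u * H u"] by simp
  ultimately show ?thesis
    by (simp add: H_def[symmetric] right_diff_distrib sum_subtractf)
qed

lemma entry_prob_flow_balance:
  fixes p q :: "'s::finite \<Rightarrow> 's \<Rightarrow> real"
  assumes tm: "transition_matrix q" and A: "A \<subseteq> S1"
    and same: "\<forall>s\<in>-S1. \<forall>t. p s t = q s t"
    and inv: "\<forall>t. (\<Sum>s\<in>UNIV. \<nu> s * p s t) = \<nu> t"
  shows "(\<Sum>u\<in>A. \<nu> u * (1 - expect_next p (entry_prob q S1 A) u))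
       = (\<Sum>u\<in>S1-A. \<nu> u * expect_next p (entry_prob q S1 A) u)"
proof (rule invariant_flow_balance[OF A _ _ _ inv])
  show "\<forall>u\<in>-S1. expect_next p (entry_prob q S1 A) u = entry_prob q S1 A u"
    using entry_prob_harmonic[OF tm A] same by (simp add: expect_next_def)
qed (auto simp: entry_prob_def)

section \<open>The stationary flow out of a subset\<close>

definition cut_flow :: "('s::finite \<Rightarrow> 's \<Rightarrow> real) \<Rightarrow> 's set \<Rightarrow> real" where
  "cut_flow q C = (\<Sum>s\<in>C. stat_dist q s * (\<Sum>t\<in>-C. q s t))"

lemma zeta1_eq_Min_cut_flow: "zeta1 q S1 = Min (cut_flow q ` {C. C \<noteq> {} \<and> C \<subset> S1})"
  unfolding zeta1_def cut_flow_def by (simp add: setcompr_eq_image)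

lemma zeta1_le_cut_flow:
  fixes q :: "'s::finite \<Rightarrow> 's \<Rightarrow> real"
  shows "C \<noteq> {} \<Longrightarrow> C \<subset> S1 \<Longrightarrow> zeta1 q S1 \<le> cut_flow q C"
  unfolding zeta1_eq_Min_cut_flow by (rule Min_le) auto

lemma rtrancl_leaves_set:
  assumes "(c, d) \<in> r\<^sup>*" "c \<in> C" "d \<notin> C"
  shows "\<exists>x y. x \<in> C \<and> y \<notin> C \<and> (x, y) \<in> r"
  using assms
proof (induction rule: rtrancl_induct)
  case (step y z)
  then show ?case by (cases "y \<in> C") auto
qed simp

lemma cut_flow_pos:
  fixes q :: "'s::finite \<Rightarrow> 's \<Rightarrow> real"
  assumes tm: "transition_matrix q" and irr: "irreducible q" and C: "C \<noteq> {}" "C \<noteq> UNIV"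
  shows "0 < cut_flow q C"
proof -
  obtain c d where "c \<in> C" "d \<notin> C" using C by blast
  moreover have "(c, d) \<in> {(x, y). 0 < q x y}\<^sup>*" using irr by (simp add: irreducible_def)
  ultimately obtain x y where xy: "x \<in> C" "y \<notin> C" "0 < q x y"
    using rtrancl_leaves_set[of c d _ C] by blast
  have "0 < (\<Sum>t\<in>-C. q x t)"
    using xy by (intro sum_pos2[of "-C" y]) (auto simp: transition_matrix_nonneg[OF tm])
  then have "0 < stat_dist q x * (\<Sum>t\<in>-C. q x t)" using stat_dist_pos[OF tm irr] by simp
  moreover have "0 \<le> stat_dist q s * (\<Sum>t\<in>-C. q s t)" for s
    using stat_dist_pos[OF tm irr, of s] transition_matrix_nonneg[OF tm]
    by (simp add: sum_nonneg)
  ultimately show ?thesis unfolding cut_flow_def using xy(1) by (intro sum_pos2[of C x]) auto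
qed

lemma zeta1_pos:
  fixes q :: "'s::finite \<Rightarrow> 's \<Rightarrow> real"
  assumes tm: "transition_matrix q" and irr: "irreducible q" and S1: "card S1 > 1"
  shows "0 < zeta1 q S1"
proof -
  obtain s0 where s0: "s0 \<in> S1" using S1 by (metis card.empty ex_in_conv not_less_zero)
  moreover have "S1 \<noteq> {s0}" using S1 by auto
  ultimately have "{s0} \<subset> S1" by auto
  then have "{C. C \<noteq> {} \<and> C \<subset> S1} \<noteq> {}" by blast
  then have "zeta1 q S1 \<in> cut_flow q ` {C. C \<noteq> {} \<and> C \<subset> S1}"
    unfolding zeta1_eq_Min_cut_flow by (intro Min_in) auto
  then obtain C where "zeta1 q S1 = cut_flow q C" "C \<noteq> {}" "C \<subset> S1" by blast
  then show ?thesis using cut_flow_pos[OF tm irr, of C] by auto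
qed

text \<open>The proof weighs the one-step equation of h = P(the first entrance into -S1 \<union> {t} is at t),
  which is at least a on A, against the invariance of \<mu>.\<close>
lemma cut_flow_fraction_into_S1:
  fixes q :: "'s::finite \<Rightarrow> 's \<Rightarrow> real"
  assumes tm: "transition_matrix q" and st: "stationary q \<mu>"
    and A: "A \<subseteq> S1" and t: "t \<in> S1 - A"
    and hit: "\<forall>s\<in>A. a \<le> prob_first_hit_eq q (-S1 \<union> {t}) t s"
  shows "a * (\<Sum>u\<in>A. \<mu> u * (\<Sum>v\<in>-A. q u v)) \<le> (\<Sum>u\<in>A. \<mu> u * (\<Sum>v\<in>S1-A. q u v))"
proof -
  define C where "C = -S1 \<union> {t}"
  define h where "h = prob_first_hit_eq q C t"
  have qn: "\<And>s t. 0 \<le> q s t" using transition_matrix_nonneg[OF tm] .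
  have \<mu>: "\<And>s. 0 \<le> \<mu> s" and inv: "\<And>t. (\<Sum>s\<in>UNIV. \<mu> s * q s t) = \<mu> t"
    using st by (auto simp: stationary_def)
  have tC: "t \<in> C" by (simp add: C_def)
  have compl_C: "-C = A \<union> (S1 - A - {t})" using A t by (auto simp: C_def)
  have h_step: "h s - (\<Sum>u\<in>A. q s u * h u) \<le> (\<Sum>v\<in>S1-A. q s v)" for s
  proof -
    have "h s = q s t + (\<Sum>u\<in>-C. q s u * h u)" unfolding h_def by (rule prob_first_hit_eq_rec[OF tm tC])
    also have "(\<Sum>u\<in>-C. q s u * h u) = (\<Sum>u\<in>A. q s u * h u) + (\<Sum>u\<in>S1-A-{t}. q s u * h u)"
      unfolding compl_C by (rule sum.union_disjoint) auto
    also have "(\<Sum>u\<in>S1-A-{t}. q s u * h u) \<le> (\<Sum>u\<in>S1-A-{t}. q s u)"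
      by (rule sum_mono) (simp add: h_def prob_first_hit_eq_le_1[OF tm tC] qn mult_left_le)
    also have "q s t + (\<Sum>u\<in>S1-A-{t}. q s u) = (\<Sum>v\<in>S1-A. q s v)"
      using sum.remove[of "S1-A" t "q s"] t by simp
    ultimately show ?thesis by linarith
  qed
  have inflow_le: "(\<Sum>u\<in>A. \<mu> u * q u w) \<le> \<mu> w" for w
    using sum_mono2[of UNIV A "\<lambda>u. \<mu> u * q u w"] inv[of w] by (simp add: \<mu> qn)
  have "a * (\<Sum>u\<in>A. \<mu> u * (\<Sum>v\<in>-A. q u v)) = (\<Sum>w\<in>A. a * (\<mu> w - (\<Sum>u\<in>A. \<mu> u * q u w)))"
  proof -
    have "(\<Sum>w\<in>A. \<Sum>u\<in>A. \<mu> u * q u w) = (\<Sum>u\<in>A. \<mu> u * (\<Sum>w\<in>A. q u w))"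
      by (simp add: sum_distrib_left) (rule sum.swap)
    moreover have "(\<Sum>v\<in>-A. q u v) = 1 - (\<Sum>w\<in>A. q u w)" for u
      using sum_split_Compl[of "q u" A] by (simp add: transition_matrix_row_sum[OF tm])
    ultimately show ?thesis
      by (simp add: sum_distrib_left[symmetric] sum_subtractf right_diff_distrib)
  qed
  also have "\<dots> \<le> (\<Sum>w\<in>A. h w * (\<mu> w - (\<Sum>u\<in>A. \<mu> u * q u w)))"
    using hit A inflow_le by (intro sum_mono mult_right_mono) (auto simp: h_def C_def)
  also have "\<dots> = (\<Sum>u\<in>A. \<mu> u * (h u - (\<Sum>w\<in>A. q u w * h w)))"
  proof -
    have "(\<Sum>u\<in>A. \<mu> u * (\<Sum>w\<in>A. q u w * h w)) = (\<Sum>w\<in>A. h w * (\<Sum>u\<in>A. \<mu> u * q u w))"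
      by (simp add: sum_distrib_left mult_ac) (rule sum.swap)
    then show ?thesis by (simp add: right_diff_distrib sum_subtractf mult_ac)
  qed
  also have "\<dots> \<le> (\<Sum>u\<in>A. \<mu> u * (\<Sum>v\<in>S1-A. q u v))"
    by (rule sum_mono) (simp add: mult_left_mono \<mu> h_step)
  finally show ?thesis .
qed

lemma zeta1_le_entry_flow:
  fixes q :: "'s::finite \<Rightarrow> 's \<Rightarrow> real"
  assumes tm: "transition_matrix q" and irr: "irreducible q" and "0 < a"
    and hit: "\<forall>s\<in>S1. \<forall>t\<in>S1. a \<le> prob_first_hit_eq q (-S1 \<union> {t}) t s"
    and A: "A \<noteq> {}" "A \<subset> S1"
  shows "a * zeta1 q S1 \<le> (\<Sum>u\<in>A. stat_dist q u * (1 - expect_next q (entry_prob q S1 A) u))"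
proof -
  obtain t where t: "t \<in> S1 - A" using A by auto
  have "a * zeta1 q S1 \<le> a * cut_flow q A"
    using zeta1_le_cut_flow[OF A] \<open>0 < a\<close> by simp
  also have "\<dots> \<le> (\<Sum>u\<in>A. stat_dist q u * (\<Sum>v\<in>S1-A. q u v))"
    unfolding cut_flow_def using A t hit
    by (intro cut_flow_fraction_into_S1[OF tm stationary_stat_dist[OF tm irr]]) auto
  also have "\<dots> \<le> (\<Sum>u\<in>A. stat_dist q u * (1 - expect_next q (entry_prob q S1 A) u))"
  proof (intro sum_mono mult_left_mono)
    fix u
    have "(\<Sum>v\<in>S1-A. q u v) = (\<Sum>v\<in>S1-A. q u v * (1 - entry_prob q S1 A v))"
      by (simp add: entry_prob_def)
    also have "\<dots> \<le> (\<Sum>v\<in>UNIV. q u v * (1 - entry_prob q S1 A v))"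
      by (rule sum_mono2)
        (auto intro!: mult_nonneg_nonneg simp: transition_matrix_nonneg[OF tm] entry_prob_bounds[OF tm])
    also have "\<dots> = 1 - expect_next q (entry_prob q S1 A) u"
      using expect_next_one_minus[OF tm, of "entry_prob q S1 A" u] by (simp add: expect_next_def)
    finally show "(\<Sum>v\<in>S1-A. q u v) \<le> 1 - expect_next q (entry_prob q S1 A) u" .
    show "0 \<le> stat_dist q u" using stat_dist_pos[OF tm irr, of u] by simp
  qed
  finally show ?thesis .
qed

section \<open>Perturbation of the escape flows\<close>

lemma close_entry_bounds:
  fixes q qh :: "'s::finite \<Rightarrow> 's \<Rightarrow> real"
  assumes close: "eps_beta_close \<epsilon> \<beta> qh q S1" and c: "0 \<le> \<epsilon> * zeta1 q S1"
    and m: "0 \<le> stat_dist q u" and q: "0 \<le> q u v" and qh: "0 \<le> qh u v"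
    and f: "0 \<le> f" "f \<le> 1" and \<beta>: "0 \<le> \<beta>"
  shows "(1-\<beta>) * (stat_dist q u * q u v * f) - \<epsilon> * zeta1 q S1 \<le> stat_dist q u * qh u v * f
       \<and> stat_dist q u * qh u v * f \<le> (1+\<beta>) * (stat_dist q u * q u v * f) + \<epsilon> * zeta1 q S1"
proof -
  define c where "c = \<epsilon> * zeta1 q S1"
  define m where "m = stat_dist q u"
  have mf: "0 \<le> m * f" using m f by (simp add: m_def)
  show ?thesis
  proof (cases "c \<le> m * q u v \<or> c \<le> m * qh u v")
    case True
    \<comment> \<open>If only the first clause of closeness applies, then c > m * qh u v \<ge> 0 forces q u v > 0.\<close>
    have ratio: "0 < q u v \<and> \<bar>1 - qh u v / q u v\<bar> \<le> \<beta>"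
    proof (cases "c \<le> m * qh u v")
      case True
      then show ?thesis using close by (simp add: eps_beta_close_def m_def c_def)
    next
      case False
      with \<open>c \<le> m * q u v \<or> c \<le> m * qh u v\<close> have "c \<le> m * q u v" by simp
      moreover have "0 \<le> m * qh u v" using m qh by (simp add: m_def)
      ultimately have "q u v \<noteq> 0" using False by auto
      with \<open>c \<le> m * q u v\<close> show ?thesis using close q by (simp add: eps_beta_close_def m_def c_def)
    qed
    then have "1 - \<beta> \<le> qh u v / q u v" "qh u v / q u v \<le> 1 + \<beta>" by (auto simp: abs_le_iff)
    then have "(1 - \<beta>) * q u v \<le> qh u v" "qh u v \<le> (1 + \<beta>) * q u v"
      using ratio by (simp_all add: le_divide_eq divide_le_eq)
    then have "((1 - \<beta>) * q u v) * (m * f) \<le> qh u v * (m * f)" "qh u v * (m * f) \<le> ((1 + \<beta>) * q u v) * (m * f)"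
      using mf by (simp_all add: mult_right_mono)
    then show ?thesis using c by (simp add: m_def c_def mult_ac)
  next
    case False
    have mq: "0 \<le> m * q u v" and mqh: "0 \<le> m * qh u v" using m q qh by (simp_all add: m_def)
    have "(1-\<beta>) * (m * q u v * f) \<le> m * q u v * f"
      using \<beta> mq f by (simp add: algebra_simps)
    also have "\<dots> \<le> m * q u v" using mq f by (simp add: mult_left_le)
    finally have "(1-\<beta>) * (m * q u v * f) \<le> m * q u v" .
    moreover have "m * qh u v * f \<le> m * qh u v" using mqh f by (simp add: mult_left_le)
    moreover have "0 \<le> m * qh u v * f" "0 \<le> (1+\<beta>) * (m * q u v * f)" using mq mqh f \<beta> by simp_all
    ultimately show ?thesis using False by (simp add: m_def c_def)
  qed
qed

lemma close_weighted_sum_bounds: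
  fixes q qh :: "'s::finite \<Rightarrow> 's \<Rightarrow> real" and f :: "'s \<Rightarrow> real"
  assumes close: "eps_beta_close \<epsilon> \<beta> qh q S1" and c: "0 \<le> \<epsilon> * zeta1 q S1"
    and tm: "transition_matrix q" and tmh: "transition_matrix qh" and m: "\<And>u. 0 \<le> stat_dist q u"
    and f: "\<And>v. 0 \<le> f v" "\<And>v. f v \<le> 1" and \<beta>: "0 \<le> \<beta>"
  shows "(1-\<beta>) * (\<Sum>u\<in>U. stat_dist q u * expect_next q f u) - real CARD('s)^2 * (\<epsilon> * zeta1 q S1)
           \<le> (\<Sum>u\<in>U. stat_dist q u * expect_next qh f u)"
    and "(\<Sum>u\<in>U. stat_dist q u * expect_next qh f u)
           \<le> (1+\<beta>) * (\<Sum>u\<in>U. stat_dist q u * expect_next q f u) + real CARD('s)^2 * (\<epsilon> * zeta1 q S1)"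
proof -
  define c where "c = \<epsilon> * zeta1 q S1"
  have expand: "(\<Sum>u\<in>U. stat_dist q u * expect_next p f u) = (\<Sum>u\<in>U. \<Sum>v\<in>UNIV. stat_dist q u * p u v * f v)"
    for p :: "'s \<Rightarrow> 's \<Rightarrow> real"
    by (simp add: expect_next_def sum_distrib_left mult.assoc)
  have count: "(\<Sum>u\<in>U. \<Sum>v\<in>(UNIV::'s set). c) \<le> real CARD('s)^2 * c"
  proof -
    have "real (card U) \<le> real CARD('s)" by (simp add: card_mono)
    then have "real (card U) * (real CARD('s) * c) \<le> real CARD('s) * (real CARD('s) * c)"
      using c by (intro mult_right_mono) (simp_all add: c_def)
    then show ?thesis by (simp add: power2_eq_square mult.assoc)
  qed
  have entry: "(1-\<beta>) * (stat_dist q u * q u v * f v) - c \<le> stat_dist q u * qh u v * f v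
       \<and> stat_dist q u * qh u v * f v \<le> (1+\<beta>) * (stat_dist q u * q u v * f v) + c" for u v
    unfolding c_def using transition_matrix_nonneg[OF tm] transition_matrix_nonneg[OF tmh]
    by (intro close_entry_bounds[OF close c m _ _ f \<beta>])
  have "(1-\<beta>) * (\<Sum>u\<in>U. \<Sum>v\<in>UNIV. stat_dist q u * q u v * f v) - (\<Sum>u\<in>U. \<Sum>v\<in>(UNIV::'s set). c)
      = (\<Sum>u\<in>U. \<Sum>v\<in>UNIV. (1-\<beta>) * (stat_dist q u * q u v * f v) - c)"
    by (simp add: sum_distrib_left sum_subtractf)
  also have "\<dots> \<le> (\<Sum>u\<in>U. \<Sum>v\<in>UNIV. stat_dist q u * qh u v * f v)"
    using entry by (intro sum_mono) blast
  finally show "(1-\<beta>) * (\<Sum>u\<in>U. stat_dist q u * expect_next q f u) - real CARD('s)^2 * (\<epsilon> * zeta1 q S1)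
           \<le> (\<Sum>u\<in>U. stat_dist q u * expect_next qh f u)"
    using count unfolding expand c_def by linarith
  have "(\<Sum>u\<in>U. \<Sum>v\<in>UNIV. stat_dist q u * qh u v * f v)
      \<le> (\<Sum>u\<in>U. \<Sum>v\<in>UNIV. (1+\<beta>) * (stat_dist q u * q u v * f v) + c)"
    using entry by (intro sum_mono) blast
  also have "\<dots> = (1+\<beta>) * (\<Sum>u\<in>U. \<Sum>v\<in>UNIV. stat_dist q u * q u v * f v) + (\<Sum>u\<in>U. \<Sum>v\<in>(UNIV::'s set). c)"
    by (simp add: sum_distrib_left sum.distrib)
  finally show "(\<Sum>u\<in>U. stat_dist q u * expect_next qh f u)
           \<le> (1+\<beta>) * (\<Sum>u\<in>U. stat_dist q u * expect_next q f u) + real CARD('s)^2 * (\<epsilon> * zeta1 q S1)"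
    using count unfolding expand c_def by linarith
qed

lemma escape_margin:
  fixes \<beta> a x Z \<Phi> Out In :: real
  assumes \<beta>: "0 < \<beta>" "\<beta> < 1/4" and a: "0 < a" and Z: "0 < Z" and x: "0 \<le> x" "x < a * \<beta> / 16"
    and \<Phi>: "a * Z \<le> \<Phi>"
    and Out: "(1-\<beta>) * \<Phi> - x * Z \<le> Out" and In: "In \<le> (1+\<beta>) * \<Phi> + x * Z"
  shows "0 < Out \<and> In < (1 + 3*\<beta>) * Out"
proof -
  have "\<beta> * \<beta> \<le> \<beta> * (1/4)" using \<beta> by (intro mult_left_mono) auto
  then have c: "\<beta> / 4 \<le> \<beta> - 3*\<beta>^2" by (simp add: power2_eq_square algebra_simps)
  have "a * Z * (\<beta> / 4) \<le> a * Z * (\<beta> - 3*\<beta>^2)" using c a Z by (intro mult_left_mono) auto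
  also have "\<dots> \<le> \<Phi> * (\<beta> - 3*\<beta>^2)" using \<Phi> c \<beta> by (intro mult_right_mono) auto
  finally have 1: "a * Z * (\<beta> / 4) \<le> \<Phi> * (\<beta> - 3*\<beta>^2)" .
  have "x * Z * (2 + 3*\<beta>) \<le> x * Z * (11/4)" using \<beta> x Z by (intro mult_left_mono) auto
  also have "\<dots> < (a * \<beta> / 16) * Z * (11/4)" using x Z by (intro mult_strict_right_mono) auto
  also have "\<dots> \<le> a * Z * (\<beta> / 4)" using a \<beta> Z by (simp add: algebra_simps)
  finally have "x * Z * (2 + 3*\<beta>) < \<Phi> * (\<beta> - 3*\<beta>^2)" using 1 by linarith
  then have margin: "(1+\<beta>) * \<Phi> + x * Z < (1 + 3*\<beta>) * ((1-\<beta>) * \<Phi> - x * Z)"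
    by (simp add: power2_eq_square algebra_simps)
  have "0 < a * Z" using a Z by simp
  then have "0 < (1+\<beta>) * \<Phi> + x * Z" using \<Phi> \<beta> x Z by (simp add: add_pos_nonneg)
  have pos: "0 < (1-\<beta>) * \<Phi> - x * Z"
  proof (rule ccontr)
    assume "\<not> ?thesis"
    then have "(1 + 3*\<beta>) * ((1-\<beta>) * \<Phi> - x * Z) \<le> 0" using \<beta> by (simp add: mult_nonneg_nonpos)
    with margin \<open>0 < (1+\<beta>) * \<Phi> + x * Z\<close> show False by linarith
  qed
  have "(1 + 3*\<beta>) * ((1-\<beta>) * \<Phi> - x * Z) \<le> (1 + 3*\<beta>) * Out"
    using Out \<beta> by (intro mult_left_mono) auto
  with margin In pos Out show ?thesis by linarith
qed

lemma escape_inequality: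
  fixes q qh :: "'s::finite \<Rightarrow> 's \<Rightarrow> real"
  assumes tm: "transition_matrix q" and irr: "irreducible q" and tmh: "transition_matrix qh"
    and close: "eps_beta_close \<epsilon> \<beta> qh q S1" and S1: "card S1 > 1"
    and a: "0 < a" and hit: "\<forall>s\<in>S1. \<forall>t\<in>S1. a \<le> prob_first_hit_eq q (-S1 \<union> {t}) t s"
    and \<beta>: "0 < \<beta>" "\<beta> < 1/4" and \<epsilon>: "0 < \<epsilon>" "real CARD('s)^2 * \<epsilon> < a * \<beta> / 16"
    and A: "A \<noteq> {}" "A \<subset> S1"
  shows "0 < (\<Sum>u\<in>A. stat_dist q u * (1 - expect_next qh (entry_prob q S1 A) u))
       \<and> (\<Sum>u\<in>S1-A. stat_dist q u * expect_next qh (entry_prob q S1 A) u)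
           < (1 + 3*\<beta>) * (\<Sum>u\<in>A. stat_dist q u * (1 - expect_next qh (entry_prob q S1 A) u))"
proof -
  define \<mu> where "\<mu> = stat_dist q"
  define G where "G = entry_prob q S1 A"
  define \<Phi> where "\<Phi> = (\<Sum>u\<in>A. \<mu> u * (1 - expect_next q G u))"
  have Z: "0 < zeta1 q S1" by (rule zeta1_pos[OF tm irr S1])
  have \<mu>: "\<And>u. 0 \<le> \<mu> u" using stat_dist_pos[OF tm irr] by (simp add: \<mu>_def less_imp_le)
  have G: "\<And>v. 0 \<le> G v" "\<And>v. G v \<le> 1" "\<And>v. 0 \<le> 1 - G v" "\<And>v. 1 - G v \<le> 1"
    using entry_prob_bounds[OF tm] by (auto simp: G_def)
  have c: "0 \<le> \<epsilon> * zeta1 q S1" using \<epsilon> Z by simp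
  have one_minus: "\<And>p u. transition_matrix p \<Longrightarrow> 1 - expect_next p G u = expect_next p (\<lambda>w. 1 - G w) u"
    by (rule expect_next_one_minus)
  have x: "0 \<le> real CARD('s)^2 * \<epsilon>" using \<epsilon> by simp
  have balance: "\<Phi> = (\<Sum>u\<in>S1-A. \<mu> u * expect_next q G u)"
    unfolding \<Phi>_def \<mu>_def G_def using A
    by (intro entry_prob_flow_balance[OF tm])
      (auto simp: stationary_stat_dist[OF tm irr, unfolded stationary_def])
  have \<Phi>: "a * zeta1 q S1 \<le> \<Phi>"
    unfolding \<Phi>_def \<mu>_def G_def by (rule zeta1_le_entry_flow[OF tm irr a hit A])
  have Out: "(1-\<beta>) * \<Phi> - real CARD('s)^2 * \<epsilon> * zeta1 q S1
      \<le> (\<Sum>u\<in>A. \<mu> u * (1 - expect_next qh G u))"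
    using close_weighted_sum_bounds(1)[OF close c tm tmh _ G(3,4), where U = A] \<beta> \<mu>
    unfolding \<Phi>_def \<mu>_def by (simp add: one_minus[OF tm] one_minus[OF tmh] mult.assoc)
  have In: "(\<Sum>u\<in>S1-A. \<mu> u * expect_next qh G u) \<le> (1+\<beta>) * \<Phi> + real CARD('s)^2 * \<epsilon> * zeta1 q S1"
    using close_weighted_sum_bounds(2)[OF close c tm tmh _ G(1,2), where U = "S1-A"] \<beta> \<mu>
    unfolding balance \<mu>_def by (simp add: mult.assoc)
  show ?thesis
    using escape_margin[OF \<beta> a Z x \<epsilon>(2) \<Phi> Out In] by (simp add: \<mu>_def G_def)
qed

section \<open>Communication structure of the perturbed chain\<close>

lemma S1_strongly_connected:
  fixes q qh :: "'s::finite \<Rightarrow> 's \<Rightarrow> real"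
  assumes tm: "transition_matrix q" and tmh: "transition_matrix qh"
    and same: "\<forall>s\<in>-S1. \<forall>t. qh s t = q s t"
    and escape: "\<And>A. A \<noteq> {} \<Longrightarrow> A \<subset> S1 \<Longrightarrow>
                   0 < (\<Sum>u\<in>A. \<nu> u * (1 - expect_next qh (entry_prob q S1 A) u))"
    and s: "s \<in> S1" and t: "t \<in> S1"
  shows "(s, t) \<in> {(x, y). 0 < qh x y}\<^sup>*"
proof -
  define E where "E = {(x, y). 0 < qh x y}"
  define A where "A = {u\<in>S1. (s, u) \<in> E\<^sup>*}"
  have "A = S1"
  proof (rule ccontr)
    assume "A \<noteq> S1"
    then have A: "A \<noteq> {}" "A \<subset> S1" using s by (auto simp: A_def)
    define G where "G = entry_prob q S1 A"
    have G1: "G v \<le> 1" for v using entry_prob_bounds[OF tm] by (simp add: G_def)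
    obtain u where u: "u \<in> A" "\<nu> u * (1 - expect_next qh G u) \<noteq> 0"
      using escape[OF A] by (metis (mono_tags, lifting) G_def less_irrefl sum.neutral)
    then have "0 < expect_next qh (\<lambda>w. 1 - G w) u"
      using expect_next_bounds(2)[OF tmh, of G u] entry_prob_bounds[OF tm]
      by (simp add: G_def expect_next_one_minus[OF tmh, symmetric])
    then obtain v where "0 < qh u v * (1 - G v)"
      unfolding expect_next_def by (metis (no_types, lifting) less_irrefl not_le sum_nonpos)
    then have qv: "0 < qh u v" and Gv: "G v < 1"
      using transition_matrix_nonneg[OF tmh, of u v] G1[of v] by (auto simp: zero_less_mult_iff)
    have sv: "(s, v) \<in> E\<^sup>*" using u(1) qv by (auto simp: A_def E_def intro: rtrancl_into_rtrancl)
    show False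
    proof (cases "v \<in> S1")
      case True
      then have "v \<in> A" using sv by (simp add: A_def)
      then show False using Gv by (simp add: G_def entry_prob_def)
    next
      case False
      then have "v \<notin> A" using A by auto
      then have "0 < (\<Sum>x\<in>S1-A. hit_at q S1 v x)" using Gv False by (simp add: G_def entry_prob_def)
      then obtain x where x: "x \<in> S1 - A" "0 < hit_at q S1 v x"
        by (metis (no_types, lifting) less_irrefl not_le sum_nonpos)
      have "(v, x) \<in> E\<^sup>*"
        unfolding E_def using hit_at_pos_imp_path[OF tm same x(2)] False by simp
      then have "x \<in> A" using sv x(1) by (auto simp: A_def intro: rtrancl_trans)
      then show False using x(1) by simp
    qed
  qed
  then show ?thesis using t by (auto simp: A_def E_def)
qed

lemma reaches_S1_point_after_modification:
  fixes q qh :: "'s::finite \<Rightarrow> 's \<Rightarrow> real"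
  assumes irr: "irreducible q" and same: "\<forall>s\<in>-S1. \<forall>t. qh s t = q s t"
    and from_S1: "\<And>s. s \<in> S1 \<Longrightarrow> (s, s0) \<in> {(x, y). 0 < qh x y}\<^sup>*"
  shows "(x, s0) \<in> {(x, y). 0 < qh x y}\<^sup>*"
proof -
  have "(x, s0) \<in> {(x, y). 0 < q x y}\<^sup>*" using irr by (simp add: irreducible_def)
  then show ?thesis
  proof (induction rule: converse_rtrancl_induct)
    case (step y z)
    show ?case
    proof (cases "y \<in> S1")
      case False
      with step.hyps(1) same have "0 < qh y z" by simp
      with step.IH show ?thesis by (simp add: converse_rtrancl_into_rtrancl)
    qed (rule from_S1)
  qed simp
qed

lemma recurrent_class_of_common_target:
  assumes target: "\<And>x. (x, s0) \<in> {(x, y). 0 < p x y}\<^sup>*"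
  shows "recurrent_class p {y. (s0, y) \<in> {(x, y). 0 < p x y}\<^sup>*}"
  unfolding recurrent_class_def
proof (intro conjI ballI allI impI)
  fix x y assume "x \<in> {y. (s0, y) \<in> {(x, y). 0 < p x y}\<^sup>*}" "y \<in> {y. (s0, y) \<in> {(x, y). 0 < p x y}\<^sup>*}"
  then show "(x, y) \<in> {(u, v). 0 < p u v}\<^sup>*"
    using target[of x] by (meson mem_Collect_eq rtrancl_trans)
next
  fix x y assume "x \<in> {y. (s0, y) \<in> {(x, y). 0 < p x y}\<^sup>*}" "0 < p x y"
  then show "y \<in> {y. (s0, y) \<in> {(x, y). 0 < p x y}\<^sup>*}"
    by (auto intro: rtrancl_into_rtrancl)
qed auto

section \<open>Comparison of the stationary distributions on S1\<close>

text \<open>If the density \<nu>/\<mu> is at least c on A, then the flow balance of \<nu>, compared with the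
  escape inequality for \<mu>, forces it to be at least c/\<rho> somewhere in S1 \<setminus> A.\<close>
lemma density_level_step:
  fixes q qh :: "'s::finite \<Rightarrow> 's \<Rightarrow> real"
  assumes tm: "transition_matrix q" and same: "\<forall>s\<in>-S1. \<forall>t. qh s t = q s t"
    and tmh: "transition_matrix qh" and \<nu>: "stationary qh \<nu>" and \<mu>: "\<And>u. 0 < \<mu> u"
    and \<rho>: "1 \<le> \<rho>" and A: "A \<noteq> {}" "A \<subset> S1"
    and escape: "(\<Sum>u\<in>S1-A. \<mu> u * expect_next qh (entry_prob q S1 A) u)
                   < \<rho> * (\<Sum>u\<in>A. \<mu> u * (1 - expect_next qh (entry_prob q S1 A) u))"
    and level: "\<forall>u\<in>A. c \<le> \<nu> u / \<mu> u"
  shows "\<exists>w\<in>S1-A. c \<le> \<rho> * (\<nu> w / \<mu> w)"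
proof (rule ccontr)
  define P where "P = expect_next qh (entry_prob q S1 A)"
  define r where "r u = \<nu> u / \<mu> u" for u
  have \<nu>_eq: "\<nu> u = r u * \<mu> u" for u using \<mu>[of u] by (simp add: r_def)
  have r: "0 \<le> r u" for u using \<nu> \<mu>[of u] by (simp add: r_def stationary_def)
  have P: "0 \<le> P u" "0 \<le> 1 - P u" for u
    using expect_next_bounds[OF tmh entry_prob_bounds[OF tm]] by (auto simp: P_def)
  assume "\<not> ?thesis"
  then have below: "\<forall>w\<in>S1-A. \<rho> * r w < c" by (auto simp: not_le r_def)
  obtain w0 where "w0 \<in> S1 - A" using A by auto
  with below have "\<rho> * r w0 < c" by blast
  moreover have "0 \<le> \<rho> * r w0" using r \<rho> by simp
  ultimately have c: "0 < c" by linarith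
  have "c * (\<Sum>u\<in>A. \<mu> u * (1 - P u)) \<le> (\<Sum>u\<in>A. \<nu> u * (1 - P u))"
    unfolding sum_distrib_left
  proof (intro sum_mono)
    fix u assume "u \<in> A"
    then have "c * (\<mu> u * (1 - P u)) \<le> r u * (\<mu> u * (1 - P u))"
      using level \<mu>[of u] P(2)[of u] by (intro mult_right_mono) (auto simp: r_def)
    then show "c * (\<mu> u * (1 - P u)) \<le> \<nu> u * (1 - P u)" by (simp add: \<nu>_eq mult.assoc)
  qed
  also have "\<dots> = (\<Sum>u\<in>S1-A. \<nu> u * P u)"
    unfolding P_def using A \<nu> by (intro entry_prob_flow_balance[OF tm _ same]) (auto simp: stationary_def)
  also have "\<dots> \<le> (\<Sum>u\<in>S1-A. (c / \<rho>) * (\<mu> u * P u))"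
  proof (intro sum_mono)
    fix u assume "u \<in> S1 - A"
    then have "r u \<le> c / \<rho>" using below \<rho> by (simp add: le_divide_eq mult.commute less_imp_le)
    then have "r u * (\<mu> u * P u) \<le> (c / \<rho>) * (\<mu> u * P u)"
      using \<mu>[of u] P(1)[of u] by (intro mult_right_mono) auto
    then show "\<nu> u * P u \<le> (c / \<rho>) * (\<mu> u * P u)" by (simp add: \<nu>_eq mult.assoc)
  qed
  also have "\<dots> = (c / \<rho>) * (\<Sum>u\<in>S1-A. \<mu> u * P u)" by (simp add: sum_distrib_left)
  also have "\<dots> < (c / \<rho>) * (\<rho> * (\<Sum>u\<in>A. \<mu> u * (1 - P u)))"
    using escape c \<rho> by (intro mult_strict_left_mono) (auto simp: P_def)
  finally show False using \<rho> by simp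
qed

lemma Max_le_pow_mult_of_level_steps:
  fixes r :: "'a \<Rightarrow> real"
  assumes S: "finite S" and \<rho>: "1 \<le> \<rho>" and r: "\<And>u. u \<in> S \<Longrightarrow> 0 \<le> r u"
    and step: "\<And>A c. A \<noteq> {} \<Longrightarrow> A \<subset> S \<Longrightarrow> \<forall>u\<in>A. c \<le> r u \<Longrightarrow> \<exists>w\<in>S-A. c \<le> \<rho> * r w"
    and u: "u \<in> S"
  shows "Max (r ` S) \<le> \<rho> ^ (card S - 1) * r u"
proof -
  define M where "M = Max (r ` S)"
  have mono: "M \<le> \<rho> ^ Suc k * r v" if "v \<in> S" "M \<le> \<rho> ^ k * r v" for k v
  proof -
    have "\<rho> ^ k * r v \<le> \<rho> ^ Suc k * r v"
      using \<rho> r[OF that(1)] by (intro mult_right_mono) (auto intro: power_increasing)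
    with that(2) show ?thesis by linarith
  qed
  \<comment> \<open>The level sets {v. M \<le> \<rho>^k * r v} grow by at least one element in each step.\<close>
  have "k < card S \<Longrightarrow> \<exists>B\<subseteq>S. k < card B \<and> (\<forall>v\<in>B. M \<le> \<rho> ^ k * r v)" for k
  proof (induction k)
    case 0
    have "M \<in> r ` S" unfolding M_def using S u by (intro Max_in) auto
    then obtain v where "v \<in> S" "r v = M" by auto
    then show ?case by (intro exI[of _ "{v}"]) auto
  next
    case (Suc k)
    define A where "A = {v\<in>S. M \<le> \<rho> ^ k * r v}"
    have AS: "A \<subseteq> S" by (auto simp: A_def)
    obtain B where B: "B \<subseteq> S" "k < card B" "\<forall>v\<in>B. M \<le> \<rho> ^ k * r v"
      using Suc by auto
    then have "B \<subseteq> A" by (auto simp: A_def)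
    then have cA: "k < card A" using B(2) card_mono[OF finite_subset[OF AS S]] by (meson less_le_trans)
    show ?case
    proof (cases "A = S")
      case True
      have "\<forall>v\<in>S. M \<le> \<rho> ^ Suc k * r v"
      proof
        fix v assume "v \<in> S"
        with True have "M \<le> \<rho> ^ k * r v" by (auto simp: A_def)
        with \<open>v \<in> S\<close> show "M \<le> \<rho> ^ Suc k * r v" by (rule mono)
      qed
      with Suc.prems show ?thesis by blast
    next
      case False
      have \<rho>k: "0 < \<rho> ^ k" using \<rho> by simp
      have "A \<noteq> {}" "A \<subset> S" using cA AS False by auto
      moreover have "\<forall>v\<in>A. M / \<rho> ^ k \<le> r v" using \<rho>k by (auto simp: A_def divide_le_eq mult.commute)
      ultimately obtain w where w: "w \<in> S - A" "M / \<rho> ^ k \<le> \<rho> * r w"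
        using step[of A "M / \<rho> ^ k"] by blast
      then have "M \<le> \<rho> ^ Suc k * r w" using \<rho>k by (simp add: divide_le_eq mult_ac)
      moreover have "M \<le> \<rho> ^ Suc k * r v" if "v \<in> A" for v
        using that mono by (simp add: A_def)
      moreover have "Suc k < card (insert w A)"
        using w cA finite_subset[OF AS S] by simp
      ultimately show ?thesis using w AS by (intro exI[of _ "insert w A"]) auto
    qed
  qed
  moreover have "card S - 1 < card S" using S u card_gt_0_iff[of S] by auto
  ultimately obtain B where B: "B \<subseteq> S" "card S - 1 < card B" "\<forall>v\<in>B. M \<le> \<rho> ^ (card S - 1) * r v"
    by blast
  have "card B \<le> card S" using card_mono[OF S B(1)] .
  then have "B = S" using B(1,2) card_subset_eq[OF S B(1)] by simp
  with B(3) u show ?thesis by (simp add: M_def)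
qed

lemma normalized_ratio_bound:
  fixes \<mu> \<nu> :: "'a \<Rightarrow> real"
  assumes S: "finite S" "s \<in> S" and \<mu>: "\<And>u. u \<in> S \<Longrightarrow> 0 < \<mu> u" and "0 < M" and K: "1 \<le> K"
    and upper: "\<And>u. u \<in> S \<Longrightarrow> \<nu> u / \<mu> u \<le> M"
    and lower: "\<And>u. u \<in> S \<Longrightarrow> M \<le> K * (\<nu> u / \<mu> u)"
  shows "\<bar>1 - (\<nu> s / (\<Sum>u\<in>S. \<nu> u)) / (\<mu> s / (\<Sum>u\<in>S. \<mu> u))\<bar> \<le> K - 1"
proof -
  define S\<mu> S\<nu> where "S\<mu> = (\<Sum>u\<in>S. \<mu> u)" and "S\<nu> = (\<Sum>u\<in>S. \<nu> u)"
  have S\<mu>: "0 < S\<mu>" unfolding S\<mu>_def using S \<mu> by (intro sum_pos2[of S s]) (auto simp: less_imp_le)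
  have "\<nu> u \<le> M * \<mu> u" "(M / K) * \<mu> u \<le> \<nu> u" if "u \<in> S" for u
    using upper[OF that] lower[OF that] \<mu>[OF that] K by (simp_all add: field_simps)
  then have S\<nu>: "S\<nu> \<le> M * S\<mu>" "(M / K) * S\<mu> \<le> S\<nu>"
    unfolding S\<mu>_def S\<nu>_def sum_distrib_left by (auto intro: sum_mono)
  have "0 < (M / K) * S\<mu>" using \<open>0 < M\<close> K S\<mu> by simp
  then have S\<nu>_pos: "0 < S\<nu>" using S\<nu> by linarith
  define X where "X = (\<nu> s / S\<nu>) / (\<mu> s / S\<mu>)"
  have X: "X = (\<nu> s / \<mu> s) * (S\<mu> / S\<nu>)" using \<mu>[OF S(2)] by (simp add: X_def field_simps)
  have "X \<le> M * (S\<mu> / S\<nu>)"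
    unfolding X using upper[OF S(2)] S\<mu> S\<nu>_pos by (intro mult_right_mono) auto
  also have "\<dots> \<le> K"
    using S\<nu>(2) S\<nu>_pos K by (simp add: field_simps)
  finally have X_le: "X \<le> K" .
  have "1 / K \<le> (M / K) * (S\<mu> / S\<nu>)"
    using S\<nu>(1) S\<nu>_pos K \<open>0 < M\<close> by (simp add: field_simps)
  also have "\<dots> \<le> X"
    unfolding X using lower[OF S(2)] S\<mu> S\<nu>_pos K by (intro mult_right_mono) (auto simp: field_simps)
  finally have X_ge: "1 / K \<le> X" .
  have "(2 - K) * K \<le> 1" using zero_le_power2[of "K - 1"] by (simp add: power2_eq_square algebra_simps)
  then have "1 - 1 / K \<le> K - 1" using K by (simp add: field_simps)
  then show ?thesis using X_le X_ge by (simp add: X_def S\<mu>_def S\<nu>_def abs_le_iff)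
qed

lemma stationary_ratio_bound:
  fixes q qh :: "'s::finite \<Rightarrow> 's \<Rightarrow> real"
  assumes tm: "transition_matrix q" and irr: "irreducible q" and tmh: "transition_matrix qh"
    and same: "\<forall>s\<in>-S1. \<forall>t. qh s t = q s t" and \<rho>: "1 \<le> \<rho>"
    and escape: "\<And>A. A \<noteq> {} \<Longrightarrow> A \<subset> S1 \<Longrightarrow>
        (\<Sum>u\<in>S1-A. stat_dist q u * expect_next qh (entry_prob q S1 A) u)
          < \<rho> * (\<Sum>u\<in>A. stat_dist q u * (1 - expect_next qh (entry_prob q S1 A) u))"
    and \<nu>: "stationary qh \<nu>" and s0: "s0 \<in> S1" "0 < \<nu> s0" and s: "s \<in> S1"
  shows "\<bar>1 - (\<nu> s / (\<Sum>u\<in>S1. \<nu> u)) / (stat_dist q s / (\<Sum>u\<in>S1. stat_dist q u))\<bar>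
           \<le> \<rho> ^ (card S1 - 1) - 1"
proof -
  define r where "r u = \<nu> u / stat_dist q u" for u
  define M where "M = Max (r ` S1)"
  have \<mu>: "\<And>u. 0 < stat_dist q u" by (rule stat_dist_pos[OF tm irr])
  have r: "0 \<le> r u" for u using \<nu> \<mu>[of u] by (simp add: r_def stationary_def)
  have lower: "M \<le> \<rho> ^ (card S1 - 1) * r u" if "u \<in> S1" for u
    unfolding M_def
  proof (rule Max_le_pow_mult_of_level_steps[OF _ \<rho> r _ that])
    show "\<exists>w\<in>S1-A. c \<le> \<rho> * r w" if "A \<noteq> {}" "A \<subset> S1" "\<forall>u\<in>A. c \<le> r u" for A c
      using density_level_step[OF tm same tmh \<nu> \<mu> \<rho> that(1,2) escape[OF that(1,2)]] that(3)
      by (simp add: r_def)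
  qed simp
  have "0 < r s0" using s0 \<mu>[of s0] by (simp add: r_def)
  also have "r s0 \<le> M" unfolding M_def using s0 by simp
  finally have "0 < M" .
  show ?thesis
  proof (rule normalized_ratio_bound[where M = M])
    show "\<nu> u / stat_dist q u \<le> M" if "u \<in> S1" for u
      using that by (simp add: M_def r_def[symmetric])
    show "M \<le> \<rho> ^ (card S1 - 1) * (\<nu> u / stat_dist q u)" if "u \<in> S1" for u
      using lower[OF that] by (simp add: r_def)
  qed (use s \<mu> \<open>0 < M\<close> \<rho> in auto)
qed

lemma Lconst_ge_card: "2 \<le> N \<Longrightarrow> real N \<le> Lconst N"
proof -
  assume N: "2 \<le> N"
  have "real (N choose 1) * real 1 ^ N \<le> (\<Sum>n=1..N-1. real (N choose n) * real n ^ N)"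
    using N by (intro member_le_sum) auto
  then show ?thesis by (simp add: Lconst_def)
qed

lemma eps_bound_simplified:
  fixes \<beta> a \<epsilon> L :: real and N :: nat
  assumes \<beta>: "0 < \<beta>" "\<beta> < 1" and a: "0 < a" "a \<le> 1" and L: "real N \<le> L" and N: "2 \<le> N"
    and \<epsilon>: "0 < \<epsilon>" "\<epsilon> < 1/2 * (a / L) ^ N * (\<beta> * (1 - \<beta>)) / (L * real N ^ 4)"
  shows "real N ^ 2 * \<epsilon> < a * \<beta> / 16"
proof -
  have L2: "2 \<le> L" using L N by linarith
  have "(a / L) ^ N \<le> (a / L) ^ 1"
    using a L2 N by (intro power_decreasing) auto
  also have "\<dots> \<le> a" using a L2 by (simp add: divide_le_eq)
  finally have "(a / L) ^ N * (\<beta> * (1 - \<beta>)) \<le> a * \<beta>"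
    using a \<beta> by (intro mult_mono) (auto simp: algebra_simps)
  moreover have "\<epsilon> * (L * real N ^ 4) < 1/2 * (a / L) ^ N * (\<beta> * (1 - \<beta>))"
    using \<epsilon> L2 N by (simp add: pos_less_divide_eq)
  ultimately have "\<epsilon> * (L * real N ^ 4) < 1/2 * a * \<beta>" by linarith
  moreover have "8 * (real N ^ 2 * \<epsilon>) \<le> (L * real N ^ 2) * (real N ^ 2 * \<epsilon>)"
  proof -
    have "4 \<le> real N ^ 2" using N power_mono[of 2 "real N" 2] by simp
    then have "2 * 4 \<le> L * real N ^ 2" using L2 by (intro mult_mono) auto
    then show ?thesis using \<epsilon> by (intro mult_right_mono) auto
  qed
  moreover have "(L * real N ^ 2) * (real N ^ 2 * \<epsilon>) = \<epsilon> * (L * real N ^ 4)"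
    by (simp add: power_numeral_reduce algebra_simps)
  ultimately show ?thesis by linarith
qed

lemma less_quarter_if_less_inverse_two_pow:
  fixes \<beta> :: real
  assumes N: "2 \<le> N" and \<beta>: "\<beta> < 1 / 2 ^ N"
  shows "\<beta> < 1/4"
proof -
  have "(2::real) ^ 2 \<le> 2 ^ N" using N by (intro power_increasing) auto
  then have "1 / (2::real) ^ N \<le> 1/4" by (simp add: divide_simps)
  with \<beta> show ?thesis by linarith
qed

lemma one_add_pow_mult_one_sub_le:
  fixes y :: real
  assumes "0 \<le> y"
  shows "(1 + y) ^ k * (1 - real k * y) \<le> 1"
proof (induction k)
  case (Suc k)
  have "(1 + y) * (1 - real (Suc k) * y) \<le> 1 - real k * y"
    using assms by (simp add: algebra_simps)
  then have "(1 + y) ^ Suc k * (1 - real (Suc k) * y) \<le> (1 + y) ^ k * (1 - real k * y)"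
    using assms by (simp add: mult.assoc mult_left_mono)
  then show ?case using Suc by linarith
qed simp

lemma four_mult_le_two_pow: "2 \<le> N \<Longrightarrow> 4 * (real N - 1) \<le> 2 ^ N"
  by (induction N rule: dec_induct) simp_all

lemma pow_growth_le_Lconst_bound:
  fixes \<beta> L :: real and N n :: nat
  assumes \<beta>: "0 < \<beta>" "\<beta> < 1 / 2 ^ N" and N: "2 \<le> N" and n: "n \<le> N" and L: "real N \<le> L"
  shows "(1 + 3*\<beta>) ^ (n - 1) - 1 \<le> 18 * \<beta> * L"
proof -
  define k where "k = N - 1"
  have k: "real k = real N - 1" using N by (simp add: k_def)
  have "4 * (real N - 1) * \<beta> \<le> 2 ^ N * \<beta>"
    using four_mult_le_two_pow[OF N] \<beta> by (intro mult_right_mono) auto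
  also have "\<dots> < 1" using \<beta> by (simp add: field_simps)
  moreover have "real k * \<beta> = 4 * (real N - 1) * \<beta> / 4" using k by simp
  ultimately have "real k * \<beta> < 1/4" by linarith
  moreover have "real k * (3*\<beta>) = 3 * (real k * \<beta>)" by simp
  ultimately have y: "real k * (3*\<beta>) \<le> 3/4" by linarith
  then have pos: "0 < 1 - real k * (3*\<beta>)" by linarith
  \<comment> \<open>Bernoulli in the form (1+y)^k \<le> 1/(1 - k y), then 1/(1-z) \<le> 1 + 4 z for z \<le> 3/4.\<close>
  have "(1 + 3*\<beta>) ^ (n - 1) \<le> (1 + 3*\<beta>) ^ k"
    using \<beta> n by (intro power_increasing) (auto simp: k_def)
  also have "\<dots> \<le> 1 / (1 - real k * (3*\<beta>))"
    using one_add_pow_mult_one_sub_le[of "3*\<beta>" k] \<beta> pos by (simp add: le_divide_eq)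
  also have "\<dots> \<le> 1 + 4 * (real k * (3*\<beta>))"
  proof -
    define z where "z = real k * (3*\<beta>)"
    have "0 \<le> z * (3 - 4 * z)" using \<beta> y by (intro mult_nonneg_nonneg) (auto simp: z_def)
    then have "1 \<le> (1 + 4 * z) * (1 - z)" by (simp add: algebra_simps)
    then show ?thesis using pos by (simp add: divide_le_eq z_def)
  qed
  also have "\<dots> \<le> 1 + 18 * \<beta> * L"
    using k L \<beta> mult_right_mono[of "real k" L \<beta>] by simp
  finally show ?thesis by simp
qed

theorem theorem2:
  fixes q qh :: "'st::finite \<Rightarrow> 'st \<Rightarrow> real"
    and S1 :: "'st set" and \<beta> a \<epsilon> :: real
  assumes "CARD('st) \<ge> 2"
    and "card S1 > 1"
    and "0 < \<beta>" and "\<beta> < 1 / 2 ^ CARD('st)"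
    and "0 < a"
    and "0 < \<epsilon>"
    and "\<epsilon> < 1/2 * (a / Lconst CARD('st)) ^ CARD('st) * (\<beta> * (1 - \<beta>))
                 / (Lconst CARD('st) * real CARD('st) ^ 4)"
    and "transition_matrix q" and "irreducible q"
    and "\<forall>s\<in>S1. \<forall>t\<in>S1. prob_first_hit_eq q (-S1 \<union> {t}) t s \<ge> a"
    and "transition_matrix qh"
    and "eps_beta_close \<epsilon> \<beta> qh q S1"
    and "\<forall>s\<in>-S1. \<forall>t. qh s t = q s t"
  shows "\<exists>R. recurrent_class qh R \<and> S1 \<subseteq> R \<and>
           (\<forall>\<mu>h. stationary qh \<mu>h \<and> (\<forall>s\<in>-R. \<mu>h s = 0) \<longrightarrow>
              (\<forall>s\<in>S1. \<bar>1 - (\<mu>h s / (\<Sum>u\<in>S1. \<mu>h u))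
                         / (stat_dist q s / (\<Sum>u\<in>S1. stat_dist q u))\<bar>
                       \<le> 18 * \<beta> * Lconst CARD('st)))"
proof -
  note N = assms(1) and S1 = assms(2) and \<beta> = assms(3,4) and a = assms(5) and \<epsilon> = assms(6,7)
    and tm = assms(8) and irr = assms(9) and hit = assms(10) and tmh = assms(11)
    and close = assms(12) and same = assms(13)
  obtain s0 where s0: "s0 \<in> S1" using S1 by (metis card.empty ex_in_conv not_less_zero)
  have \<beta>4: "\<beta> < 1/4" using less_quarter_if_less_inverse_two_pow[OF N \<beta>(2)] .
  have "a \<le> 1" using hit s0 prob_first_hit_eq_le_1[OF tm, of s0 "-S1 \<union> {s0}" s0] by fastforce
  then have "real CARD('st) ^ 2 * \<epsilon> < a * \<beta> / 16"
    using eps_bound_simplified[OF \<beta>(1) _ a _ Lconst_ge_card[OF N] N \<epsilon>] \<beta>4 by simp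
  then have escape: "0 < (\<Sum>u\<in>A. stat_dist q u * (1 - expect_next qh (entry_prob q S1 A) u))
       \<and> (\<Sum>u\<in>S1-A. stat_dist q u * expect_next qh (entry_prob q S1 A) u)
           < (1 + 3*\<beta>) * (\<Sum>u\<in>A. stat_dist q u * (1 - expect_next qh (entry_prob q S1 A) u))"
    if "A \<noteq> {}" "A \<subset> S1" for A
    using escape_inequality[OF tm irr tmh close S1 a hit \<beta>(1) \<beta>4 \<epsilon>(1) _ that] by blast
  have conn: "(s, t) \<in> {(x, y). 0 < qh x y}\<^sup>*" if "s \<in> S1" "t \<in> S1" for s t
    using S1_strongly_connected[OF tm tmh same _ that] escape by blast
  have target: "(x, s0) \<in> {(x, y). 0 < qh x y}\<^sup>*" for x
    using reaches_S1_point_after_modification[OF irr same conn] s0 by blast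
  define R where "R = {y. (s0, y) \<in> {(x, y). 0 < qh x y}\<^sup>*}"
  have "recurrent_class qh R" unfolding R_def using target by (rule recurrent_class_of_common_target)
  moreover have "S1 \<subseteq> R" using conn s0 by (auto simp: R_def)
  moreover have "\<bar>1 - (\<mu>h s / (\<Sum>u\<in>S1. \<mu>h u)) / (stat_dist q s / (\<Sum>u\<in>S1. stat_dist q u))\<bar>
      \<le> 18 * \<beta> * Lconst CARD('st)" if \<mu>h: "stationary qh \<mu>h" and s: "s \<in> S1" for \<mu>h s
  proof -
    have "0 < \<mu>h s0" using stationary_pos_at_common_target[OF tmh \<mu>h target] .
    with \<beta> escape have "\<bar>1 - (\<mu>h s / (\<Sum>u\<in>S1. \<mu>h u)) / (stat_dist q s / (\<Sum>u\<in>S1. stat_dist q u))\<bar>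
        \<le> (1 + 3*\<beta>) ^ (card S1 - 1) - 1"
      using stationary_ratio_bound[OF tm irr tmh same _ _ \<mu>h s0 _ s] by simp
    also have "\<dots> \<le> 18 * \<beta> * Lconst CARD('st)"
      using pow_growth_le_Lconst_bound[OF \<beta> N card_mono Lconst_ge_card[OF N]] by simp
    finally show ?thesis .
  qed
  ultimately show ?thesis by blast
qed

end
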